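(* For all integers $n\ge 2$ and $k\ge 1$, the number of edges of $H_{n,k}$ is $$|E_{n,k}|=\frac{3}{2}n^{k+1}-(n-1)^{k+1}-2n^k-\frac{n}{2}+1 .$$
   Context: Let $n\ge 2$ and $k\ge 1$ be integers. $H_{n,k}$ is the simple undirected graph with vertex set $V_{n,k}=\mathbb{Z}_n^k$ (so $|V_{n,k}|=n^k$), whose vertices are written as strings $x_1x_2\ldots x_k$ with $x_j\in\mathbb{Z}_n=\{0,1,\ldots,n-1\}$. Two distinct vertices are adjacent if and only if they are related by one of the following rules. For $i=0$ the prefix $x_1\ldots x_i$ is empty, and "$0\ldots0$" denotes a string of zeros completing the word to length $k$. (R1) $x_1\ldots x_{k-1}x_k\sim x_1\ldots x_{k-1}y_k$ whenever $y_k\neq x_k$. (R2) For $0\le i\le k-2$: $x_1\ldots x_i0\ldots0\sim x_1\ldots x_ix_{i+1}\ldots x_k$ whenever $x_j\neq 0$ for all $i+1\le j\le k$. (R3) For $1\le i\le k-1$: $x_1\ldots x_{i-1}x_i0\ldots0\sim x_1\ldots x_{i-1}y_i0\ldots0$ whenever $x_i,y_i\neq0$ and $x_i\ne y_i$. In particular, $H_{n,1}$ is the complete graph $K_n$. $E_{n,k}$ denotes the edge set of $H_{n,k}$. *)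

theory Defs
  imports Complex_Main
begin

text \<open>Vertices of H_{n,k}: words x_1...x_k over Z_n, represented as lists of
length k with entries in {0..<n}; list position j (0-based) holds x_{j+1}.\<close>

definition Vset :: "nat \<Rightarrow> nat \<Rightarrow> nat list set" where
  "Vset n k = {xs. length xs = k \<and> (\<forall>x\<in>set xs. x < n)}"

definition R1 :: "nat \<Rightarrow> nat list \<Rightarrow> nat list \<Rightarrow> bool" where
  "R1 k x y \<longleftrightarrow> take (k - 1) x = take (k - 1) y \<and> x ! (k - 1) \<noteq> y ! (k - 1)"

definition R2 :: "nat \<Rightarrow> nat list \<Rightarrow> nat list \<Rightarrow> bool" where
  "R2 k x y \<longleftrightarrow> (\<exists>i. i + 2 \<le> k \<and> take i x = take i y \<and>
      drop i x = replicate (k - i) 0 \<and> (\<forall>j. i \<le> j \<and> j < k \<longrightarrow> y ! j \<noteq> 0))"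

text \<open>(R3) for 1 \<le> i \<le> k-1: x_1..x_{i-1} x_i 0..0 ~ x_1..x_{i-1} y_i 0..0,
  x_i, y_i nonzero and distinct (position i-1 in 0-based indexing).\<close>
definition R3 :: "nat \<Rightarrow> nat list \<Rightarrow> nat list \<Rightarrow> bool" where
  "R3 k x y \<longleftrightarrow> (\<exists>i. 1 \<le> i \<and> i \<le> k - 1 \<and> take (i - 1) x = take (i - 1) y \<and>
      x ! (i - 1) \<noteq> 0 \<and> y ! (i - 1) \<noteq> 0 \<and> x ! (i - 1) \<noteq> y ! (i - 1) \<and>
      drop i x = replicate (k - i) 0 \<and> drop i y = replicate (k - i) 0)"

definition Hadj :: "nat \<Rightarrow> nat list \<Rightarrow> nat list \<Rightarrow> bool" where
  "Hadj k x y \<longleftrightarrow> R1 k x y \<or> R2 k x y \<or> R3 k x y"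

definition Eset :: "nat \<Rightarrow> nat \<Rightarrow> nat list set set" where
  "Eset n k = {{x, y} | x y. x \<in> Vset n k \<and> y \<in> Vset n k \<and> x \<noteq> y \<and>
      (Hadj k x y \<or> Hadj k y x)}"

end

theory Submission
  imports Defs
begin

text \<open>Split a word of length k+1 into its first letter and the rest. An edge of
  H_{n,k+1} either joins two words with the same first letter a, and is then an edge of
  the copy a\<cdot>H_{n,k}; or it is an R2-edge with i = 0, joining 0^{k+1} to one of the
  (n-1)^{k+1} words without zeros; or it is an R3-edge with i = 1, joining a0^k to b0^k
  for distinct nonzero a, b. Hence |E_{n,k+1}| = n|E_{n,k}| + (n-1)^{k+1} + C(n-1,2), and
  with |E_{n,1}| = C(n,2) the closed form follows by induction on k.\<close>

lemma ex_nat_iff_zero_or_Suc: "(\<exists>i::nat. P i) \<longleftrightarrow> P 0 \<or> (\<exists>i. P (Suc i))"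
  by (metis not0_implies_Suc)

lemma Cons_image_eq_iff:
  assumes "A \<noteq> {}"
  shows "Cons a ` A = Cons b ` B \<longleftrightarrow> a = b \<and> A = B"
proof
  assume eq: "Cons a ` A = Cons b ` B"
  obtain u where "u \<in> A" using assms by blast
  then have "a # u \<in> Cons b ` B" unfolding eq[symmetric] by (rule imageI)
  then have "a = b" by blast
  moreover have "inj (Cons a)" by (simp add: inj_def)
  ultimately show "a = b \<and> A = B" using eq by (simp add: inj_image_eq_iff)
qed simp

definition image_pairs :: "('a \<Rightarrow> 'b) \<Rightarrow> 'a set \<Rightarrow> 'b set set" where
  "image_pairs f A = (\<lambda>P. f ` P) ` {P. P \<subseteq> A \<and> card P = 2}"

lemma image_pairs_iff: "e \<in> image_pairs f A \<longleftrightarrow> (\<exists>a\<in>A. \<exists>b\<in>A. a \<noteq> b \<and> e = {f a, f b})"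
proof
  assume "e \<in> image_pairs f A"
  then show "\<exists>a\<in>A. \<exists>b\<in>A. a \<noteq> b \<and> e = {f a, f b}"
    unfolding image_pairs_def by (auto simp: card_2_iff)
next
  assume "\<exists>a\<in>A. \<exists>b\<in>A. a \<noteq> b \<and> e = {f a, f b}"
  then obtain a b where "a \<in> A" "b \<in> A" "a \<noteq> b" "e = f ` {a, b}" by auto
  then show "e \<in> image_pairs f A"
    unfolding image_pairs_def by (intro image_eqI[of _ _ "{a, b}"]) auto
qed

lemma card_image_pairs:
  assumes "inj_on f A" "finite A"
  shows "card (image_pairs f A) = card A choose 2"
proof -
  have "inj_on ((`) f) {P. P \<subseteq> A \<and> card P = 2}"
    by (rule inj_on_subset[OF inj_on_image_Pow[OF assms(1)]]) auto
  then show ?thesis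
    unfolding image_pairs_def by (simp add: card_image n_subsets[OF assms(2)])
qed

lemma real_choose_two: "real (m choose 2) = real m * (real m - 1) / 2"
proof -
  have "even (m * (m - 1))" by auto
  then have "real (m * (m - 1) div 2) = real (m * (m - 1)) / 2"
    by (simp add: real_of_nat_div)
  then show ?thesis unfolding choose_two by (cases m) (auto simp: algebra_simps)
qed

lemma R1_Cons:
  assumes "k \<ge> 1"
  shows "R1 (Suc k) (a # x) (b # y) \<longleftrightarrow> a = b \<and> R1 k x y"
  using assms by (cases k) (auto simp: R1_def)

lemma R2_Cons:
  assumes "length x = k" "length y = k"
  shows "R2 (Suc k) (a # x) (b # y) \<longleftrightarrow> (a = b \<and> R2 k x y) \<or>
     (k \<ge> 1 \<and> a = 0 \<and> x = replicate k 0 \<and> b \<noteq> 0 \<and> 0 \<notin> set y)"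
proof -
  have nonzero_Cons:
    "(\<forall>j. 0 \<le> j \<and> j < Suc k \<longrightarrow> (b # y) ! j \<noteq> 0) \<longleftrightarrow> b \<noteq> 0 \<and> 0 \<notin> set y"
    using assms(2) by (auto simp: in_set_conv_nth All_less_Suc2)
  have nonzero_shift: "(\<forall>j. Suc i \<le> j \<and> j < Suc k \<longrightarrow> (b # y) ! j \<noteq> 0) \<longleftrightarrow>
      (\<forall>j. i \<le> j \<and> j < k \<longrightarrow> y ! j \<noteq> 0)" for i
    by (metis Suc_le_D Suc_le_mono not_less_eq nth_Cons_Suc)
  show ?thesis
    unfolding R2_def
    by (subst ex_nat_iff_zero_or_Suc) (simp only: nonzero_Cons nonzero_shift, auto)
qed

lemma R3_iff_position:
  "R3 k x y \<longleftrightarrow> (\<exists>i. Suc i < k \<and> take i x = take i y \<and>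
      x ! i \<noteq> 0 \<and> y ! i \<noteq> 0 \<and> x ! i \<noteq> y ! i \<and>
      drop (Suc i) x = replicate (k - Suc i) 0 \<and> drop (Suc i) y = replicate (k - Suc i) 0)"
proof -
  have "Suc i \<le> k - 1 \<longleftrightarrow> Suc i < k" for i by arith
  then show ?thesis unfolding R3_def by (subst ex_nat_iff_zero_or_Suc) simp
qed

lemma R3_Cons:
  "R3 (Suc k) (a # x) (b # y) \<longleftrightarrow> (a = b \<and> R3 k x y) \<or>
     (k \<ge> 1 \<and> a \<noteq> 0 \<and> b \<noteq> 0 \<and> a \<noteq> b \<and> x = replicate k 0 \<and> y = replicate k 0)"
  unfolding R3_iff_position by (subst ex_nat_iff_zero_or_Suc) (simp add: Suc_le_eq, blast)

lemma Hadj_Cons: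
  assumes "k \<ge> 1" "length x = k" "length y = k"
  shows "Hadj (Suc k) (a # x) (b # y) \<longleftrightarrow> (a = b \<and> Hadj k x y) \<or>
     (a = 0 \<and> x = replicate k 0 \<and> b \<noteq> 0 \<and> 0 \<notin> set y) \<or>
     (a \<noteq> 0 \<and> b \<noteq> 0 \<and> a \<noteq> b \<and> x = replicate k 0 \<and> y = replicate k 0)"
  unfolding Hadj_def R1_Cons[OF assms(1)] R2_Cons[OF assms(2,3)] R3_Cons
  using assms(1) by blast

definition Hadj_sym :: "nat \<Rightarrow> nat list \<Rightarrow> nat list \<Rightarrow> bool" where
  "Hadj_sym k x y \<longleftrightarrow> Hadj k x y \<or> Hadj k y x"

lemma Eset_eq_Hadj_sym:
  "Eset n k = {{x, y} | x y. x \<in> Vset n k \<and> y \<in> Vset n k \<and> x \<noteq> y \<and> Hadj_sym k x y}"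
  unfolding Eset_def Hadj_sym_def ..

lemma Hadj_sym_Cons:
  assumes "k \<ge> 1" "length x = k" "length y = k"
  shows "Hadj_sym (Suc k) (a # x) (b # y) \<longleftrightarrow> (a = b \<and> Hadj_sym k x y) \<or>
     (a = 0 \<and> x = replicate k 0 \<and> b \<noteq> 0 \<and> 0 \<notin> set y) \<or>
     (b = 0 \<and> y = replicate k 0 \<and> a \<noteq> 0 \<and> 0 \<notin> set x) \<or>
     (a \<noteq> 0 \<and> b \<noteq> 0 \<and> a \<noteq> b \<and> x = replicate k 0 \<and> y = replicate k 0)"
  unfolding Hadj_sym_def Hadj_Cons[OF assms] Hadj_Cons[OF assms(1,3,2)] by blast

lemma Cons_in_Vset_iff: "a # x \<in> Vset n (Suc k) \<longleftrightarrow> a < n \<and> x \<in> Vset n k"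
  unfolding Vset_def by auto

lemma length_if_in_Vset: "x \<in> Vset n k \<Longrightarrow> length x = k"
  unfolding Vset_def by simp

lemma finite_Vset: "finite (Vset n k)"
proof -
  have "Vset n k = {xs. set xs \<subseteq> {0..<n} \<and> length xs = k}"
    unfolding Vset_def by auto
  then show ?thesis by (simp add: finite_lists_length_eq)
qed

lemma finite_Eset: "finite (Eset n k)"
  by (rule finite_subset[of _ "Pow (Vset n k)"]) (auto simp: Eset_def finite_Vset)

lemma Eset_nonempty_edge: "e \<in> Eset n k \<Longrightarrow> e \<noteq> {}"
  unfolding Eset_def by blast

definition nonzero_words :: "nat \<Rightarrow> nat \<Rightarrow> nat list set" where
  "nonzero_words n k = {xs. set xs \<subseteq> {1..<n} \<and> length xs = k}"

lemma nonzero_words_iff: "z \<in> nonzero_words n k \<longleftrightarrow> z \<in> Vset n k \<and> 0 \<notin> set z"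
  unfolding nonzero_words_def Vset_def by (auto simp: subset_iff Suc_le_eq intro: gr0I)

lemma Cons_in_nonzero_words_iff:
  "c # z \<in> nonzero_words n (Suc k) \<longleftrightarrow> c \<in> {1..<n} \<and> z \<in> nonzero_words n k"
  unfolding nonzero_words_def by auto

definition lifted_edges :: "nat \<Rightarrow> nat \<Rightarrow> nat list set set" where
  "lifted_edges n k = (\<lambda>(a, e). Cons a ` e) ` ({0..<n} \<times> Eset n k)"

definition zero_spokes :: "nat \<Rightarrow> nat \<Rightarrow> nat list set set" where
  "zero_spokes n k = (\<lambda>y. {replicate (Suc k) 0, y}) ` nonzero_words n (Suc k)"

definition leading_clique :: "nat \<Rightarrow> nat \<Rightarrow> nat list set set" where
  "leading_clique n k = image_pairs (\<lambda>a. a # replicate k 0) {1..<n}"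

lemma doubleton_in_EsetI:
  "x \<in> Vset n k \<Longrightarrow> y \<in> Vset n k \<Longrightarrow> x \<noteq> y \<Longrightarrow> Hadj_sym k x y \<Longrightarrow> {x, y} \<in> Eset n k"
  unfolding Eset_eq_Hadj_sym by blast

lemma EsetE:
  assumes "e \<in> Eset n k"
  obtains x y where "e = {x, y}" "x \<in> Vset n k" "y \<in> Vset n k" "x \<noteq> y" "Hadj_sym k x y"
  using assms unfolding Eset_eq_Hadj_sym by blast

lemma lifted_edges_subset_Eset:
  assumes "k \<ge> 1"
  shows "lifted_edges n k \<subseteq> Eset n (Suc k)"
proof
  fix e assume "e \<in> lifted_edges n k"
  then obtain a e' where a: "a < n" and e': "e' \<in> Eset n k" and e: "e = Cons a ` e'"
    unfolding lifted_edges_def by auto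
  obtain x y where "e' = {x, y}" "x \<in> Vset n k" "y \<in> Vset n k" "x \<noteq> y" "Hadj_sym k x y"
    using e' by (rule EsetE)
  moreover from this have "Hadj_sym (Suc k) (a # x) (a # y)"
    using Hadj_sym_Cons[OF assms] length_if_in_Vset by blast
  ultimately show "e \<in> Eset n (Suc k)"
    using a e by (auto intro!: doubleton_in_EsetI simp: Cons_in_Vset_iff)
qed

lemma zero_spokes_subset_Eset:
  assumes "k \<ge> 1"
  shows "zero_spokes n k \<subseteq> Eset n (Suc k)"
proof
  fix e assume "e \<in> zero_spokes n k"
  then obtain w where w: "w \<in> nonzero_words n (Suc k)" and e: "e = {replicate (Suc k) 0, w}"
    unfolding zero_spokes_def by blast
  then obtain b y where w_Cons: "w = b # y" by (cases w) (auto simp: nonzero_words_def)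
  with w have b: "b \<in> {1..<n}" and y: "y \<in> nonzero_words n k"
    by (simp_all add: Cons_in_nonzero_words_iff)
  have "Hadj_sym (Suc k) (0 # replicate k 0) (b # y)"
    using Hadj_sym_Cons[OF assms] b y by (auto simp: nonzero_words_iff length_if_in_Vset)
  moreover have "replicate (Suc k) 0 \<in> Vset n (Suc k)" "b # y \<in> Vset n (Suc k)"
    using b y by (auto simp: Vset_def nonzero_words_iff)
  ultimately show "e \<in> Eset n (Suc k)"
    unfolding e w_Cons using b by (intro doubleton_in_EsetI) auto
qed

lemma leading_clique_subset_Eset:
  assumes "k \<ge> 1"
  shows "leading_clique n k \<subseteq> Eset n (Suc k)"
proof
  fix e assume "e \<in> leading_clique n k"
  then obtain a b where ab: "a \<in> {1..<n}" "b \<in> {1..<n}" "a \<noteq> b"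
    and e: "e = {a # replicate k 0, b # replicate k 0}"
    unfolding leading_clique_def image_pairs_iff by blast
  have "Hadj_sym (Suc k) (a # replicate k 0) (b # replicate k 0)"
    using Hadj_sym_Cons[OF assms] ab by auto
  then show "e \<in> Eset n (Suc k)"
    unfolding e using ab by (intro doubleton_in_EsetI) (auto simp: Vset_def)
qed

lemma Eset_Suc_subset:
  assumes "k \<ge> 1"
  shows "Eset n (Suc k) \<subseteq> lifted_edges n k \<union> zero_spokes n k \<union> leading_clique n k"
proof
  fix e assume "e \<in> Eset n (Suc k)"
  then obtain x y where e: "e = {x, y}" and V: "x \<in> Vset n (Suc k)" "y \<in> Vset n (Suc k)"
    and "x \<noteq> y" and adj: "Hadj_sym (Suc k) x y"
    by (rule EsetE)
  obtain a x' where x: "x = a # x'" using length_if_in_Vset[OF V(1)] by (cases x) auto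
  obtain b y' where y: "y = b # y'" using length_if_in_Vset[OF V(2)] by (cases y) auto
  have a: "a < n" "x' \<in> Vset n k" and b: "b < n" "y' \<in> Vset n k"
    using V unfolding x y Cons_in_Vset_iff by auto
  note Cons_cases = adj[unfolded x y Hadj_sym_Cons[OF assms length_if_in_Vset[OF a(2)]
        length_if_in_Vset[OF b(2)]]]
  have zero_spoke: "{replicate (Suc k) 0, c # z} \<in> zero_spokes n k"
    if "c < n" "z \<in> Vset n k" "c \<noteq> 0" "0 \<notin> set z" for c z
    using that unfolding zero_spokes_def
    by (intro imageI) (simp add: Cons_in_nonzero_words_iff nonzero_words_iff Cons_in_Vset_iff)
  show "e \<in> lifted_edges n k \<union> zero_spokes n k \<union> leading_clique n k"
    using Cons_cases
  proof (elim disjE conjE)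
    assume "a = b" "Hadj_sym k x' y'"
    then have "{x', y'} \<in> Eset n k"
      using a b \<open>x \<noteq> y\<close> unfolding x y by (intro doubleton_in_EsetI) auto
    then show ?thesis
      unfolding lifted_edges_def e x y \<open>a = b\<close> using b
      by (intro UnI1 image_eqI[of _ _ "(b, {x', y'})"]) auto
  next
    assume "a = 0" "x' = replicate k 0" "b \<noteq> 0" "0 \<notin> set y'"
    then show ?thesis using zero_spoke[OF b] unfolding e x y by simp
  next
    assume "b = 0" "y' = replicate k 0" "a \<noteq> 0" "0 \<notin> set x'"
    then show ?thesis using zero_spoke[OF a] unfolding e x y by (simp add: insert_commute)
  next
    assume "a \<noteq> 0" "b \<noteq> 0" "a \<noteq> b" "x' = replicate k 0" "y' = replicate k 0"
    then show ?thesis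
      using a b unfolding e x y by (intro UnI2) (force simp: leading_clique_def image_pairs_iff)
  qed
qed

lemma card_lifted_edges: "card (lifted_edges n k) = n * card (Eset n k)"
proof -
  have "inj_on (\<lambda>(a, e). Cons a ` e) ({0..<n} \<times> Eset n k)"
    by (rule inj_onI) (clarsimp simp: Cons_image_eq_iff[OF Eset_nonempty_edge])
  then show ?thesis
    unfolding lifted_edges_def by (simp add: card_image card_cartesian_product)
qed

lemma card_zero_spokes: "card (zero_spokes n k) = (n - 1) ^ Suc k"
proof -
  have "replicate (Suc k) 0 \<notin> nonzero_words n (Suc k)"
    by (simp add: nonzero_words_iff)
  then have "inj_on (\<lambda>y. {replicate (Suc k) 0, y}) (nonzero_words n (Suc k))"
    by (intro inj_onI) (simp add: doubleton_eq_iff, blast)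
  then have "card (zero_spokes n k) = card (nonzero_words n (Suc k))"
    unfolding zero_spokes_def by (rule card_image)
  also have "\<dots> = (n - 1) ^ Suc k"
    unfolding nonzero_words_def by (simp add: card_lists_length_eq)
  finally show ?thesis .
qed

lemma card_leading_clique: "card (leading_clique n k) = (n - 1) choose 2"
  unfolding leading_clique_def by (subst card_image_pairs) (auto intro: inj_onI)

lemma lifted_edges_same_hd: "e \<in> lifted_edges n k \<Longrightarrow> u \<in> e \<Longrightarrow> v \<in> e \<Longrightarrow> hd u = hd v"
  unfolding lifted_edges_def by auto

lemma zero_spokes_hd: "e \<in> zero_spokes n k \<Longrightarrow> \<exists>u\<in>e. \<exists>v\<in>e. hd u \<noteq> hd v \<and> hd u = 0"
  unfolding zero_spokes_def by (auto simp: nonzero_words_def length_Suc_conv)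

lemma leading_clique_hd:
  "e \<in> leading_clique n k \<Longrightarrow> (\<exists>u\<in>e. \<exists>v\<in>e. hd u \<noteq> hd v) \<and> (\<forall>u\<in>e. hd u \<noteq> 0)"
  unfolding leading_clique_def image_pairs_iff by auto

lemma card_Eset_Suc:
  assumes "k \<ge> 1"
  shows "card (Eset n (Suc k)) = n * card (Eset n k) + (n - 1) ^ Suc k + ((n - 1) choose 2)"
proof -
  have decomp: "Eset n (Suc k) = lifted_edges n k \<union> zero_spokes n k \<union> leading_clique n k"
    using assms by (intro equalityI Eset_Suc_subset Un_least lifted_edges_subset_Eset
        zero_spokes_subset_Eset leading_clique_subset_Eset)
  have "lifted_edges n k \<inter> zero_spokes n k = {}"
    using lifted_edges_same_hd zero_spokes_hd by blast
  moreover have "lifted_edges n k \<inter> leading_clique n k = {}"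
    using lifted_edges_same_hd leading_clique_hd by blast
  moreover have "zero_spokes n k \<inter> leading_clique n k = {}"
    using zero_spokes_hd leading_clique_hd by blast
  ultimately show ?thesis
    using finite_Eset[of n "Suc k"] unfolding decomp
    by (simp add: card_Un_disjoint Int_Un_distrib2 card_lifted_edges card_zero_spokes
        card_leading_clique)
qed

lemma Hadj_sym_singleton: "Hadj_sym 1 [a] [b] \<longleftrightarrow> a \<noteq> b"
  unfolding Hadj_sym_def Hadj_def R1_def R2_def R3_def by auto

lemma Vset_one: "Vset n 1 = (\<lambda>a. [a]) ` {0..<n}"
  unfolding Vset_def by (auto simp: length_Suc_conv)

lemma Eset_one: "Eset n 1 = image_pairs (\<lambda>a. [a]) {0..<n}"
proof (intro set_eqI iffI)
  fix e assume "e \<in> Eset n 1"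
  then obtain x y where e: "e = {x, y}" and "x \<in> Vset n 1" "y \<in> Vset n 1" "x \<noteq> y"
    by (rule EsetE)
  then obtain a b where "x = [a]" "y = [b]" "a \<in> {0..<n}" "b \<in> {0..<n}" "a \<noteq> b"
    unfolding Vset_one by blast
  then show "e \<in> image_pairs (\<lambda>a. [a]) {0..<n}"
    unfolding e image_pairs_iff by blast
next
  fix e assume "e \<in> image_pairs (\<lambda>a. [a]) {0..<n}"
  then obtain a b where ab: "a \<in> {0..<n}" "b \<in> {0..<n}" "a \<noteq> b" and e: "e = {[a], [b]}"
    unfolding image_pairs_iff by blast
  have "[a] \<in> Vset n 1" "[b] \<in> Vset n 1" "Hadj_sym 1 [a] [b]"
    using ab unfolding Vset_one Hadj_sym_singleton by auto
  then show "e \<in> Eset n 1"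
    unfolding e using ab(3) by (simp add: doubleton_in_EsetI)
qed

lemma card_Eset_one: "card (Eset n 1) = n choose 2"
  unfolding Eset_one by (subst card_image_pairs) (auto intro: inj_onI)

theorem mainTheorem1:
  fixes n k :: nat
  assumes "n \<ge> 2" and "k \<ge> 1"
  shows "real (card (Eset n k)) =
    3 / 2 * real n ^ (k + 1) - (real n - 1) ^ (k + 1) - 2 * real n ^ k - real n / 2 + 1"
  using assms(2)
proof (induction k rule: dec_induct)
  case base
  show ?case using card_Eset_one[of n] real_choose_two[of n]
    by (simp add: power2_eq_square field_simps)
next
  case (step k)
  have "real (card (Eset n (Suc k))) =
      real n * real (card (Eset n k)) + (real n - 1) ^ Suc k + (real n - 1) * (real n - 2) / 2"
    using card_Eset_Suc[OF step(1)] real_choose_two[of "n - 1"] assms(1)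
    by (simp add: of_nat_diff)
  then show ?case
    unfolding step.IH by (simp add: field_simps)
qed

end
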